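(* Let $p$ be an odd prime and $M$ the sub-add move matrix. Then every directed cycle in $\Gamma_{M,\,p}$ has length $1$, $s$ or $k$ (where $s$ and $k$ need not be distinct).
   Context: The sub-add move matrix is $M=\begin{pmatrix}1&-1\\1&1\end{pmatrix}$. For $n\in\mathbb N$, $\Gamma_{M,\,n}$ is the directed graph with vertex set $\mathbb Z_n^2$ and arcs $((a,b),(a-b,a+b))$ (mod $n$; loops allowed). A directed cycle is a cycle in the underlying undirected graph such that in the induced directed subgraph every vertex has in- and out-degree $1$; a loop is a directed $1$-cycle, a pair of opposite arcs a directed $2$-cycle. Let $t$ be the multiplicative order of $-4$ in $GF(p)$ and $k=4t$ (which is the $\mathbb Z_p$-order of $M$, i.e. the least positive $k$ with $M^k\equiv I \bmod p$). Let $i\in GF(p^2)$ satisfy $i^2=-1$, the choice of square root of $-1$ being made so that ${\rm ord}(1-i)\le{\rm ord}(1+i)$ (multiplicative orders in $GF(p^2)$), and let $s={\rm ord}(1-i)$. *)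

theory Defs
  imports "HOL-Number_Theory.Number_Theory" "HOL-Library.Cardinality"
begin

definition zn2_verts :: "nat \<Rightarrow> (int \<times> int) set" where
  "zn2_verts n = {0..<int n} \<times> {0..<int n}"

text \<open>Arcs of Gamma_{M,n} for the sub-add matrix M = [[1,-1],[1,1]]:
  (a,b) -> (a-b, a+b) mod n.\<close>
definition subadd_arc :: "nat \<Rightarrow> int \<times> int \<Rightarrow> int \<times> int \<Rightarrow> bool" where
  "subadd_arc n v w \<longleftrightarrow> w = ((fst v - snd v) mod int n, (fst v + snd v) mod int n)"

text \<open>A directed cycle of length L = length cs in the digraph (V,E):
  L distinct vertices v_0,...,v_{L-1} with arcs v_j -> v_{(j+1) mod L}
  (L = 1: a loop; L = 2: a pair of opposite arcs).\<close>
definition directed_cycle ::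
  "'v set \<Rightarrow> ('v \<Rightarrow> 'v \<Rightarrow> bool) \<Rightarrow> 'v list \<Rightarrow> bool" where
  "directed_cycle V E cs \<longleftrightarrow> cs \<noteq> [] \<and> distinct cs \<and> set cs \<subseteq> V \<and>
     (\<forall>j < length cs. E (cs ! j) (cs ! ((j + 1) mod length cs)))"

text \<open>Multiplicative order of an element of a monoid (0 if none).\<close>
definition mult_ord :: "'a::monoid_mult \<Rightarrow> nat" where
  "mult_ord x = (LEAST n. 0 < n \<and> x ^ n = 1)"

definition ord_minus4 :: "nat \<Rightarrow> nat" where
  "ord_minus4 p = (LEAST n. 0 < n \<and> [(-4::int) ^ n = 1] (mod int p))"

end

theory Submission
  imports Defs
begin

text \<open>Over \<open>GF(p\<^sup>2)\<close> the matrix \<open>M\<close> diagonalises: in the coordinates \<open>z = a + b i\<close> and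
  \<open>w = a - b i\<close> the arc map becomes \<open>(z, w) \<mapsto> ((1 + i) z, (1 - i) w)\<close>, and this change of
  coordinates is injective on \<open>\<int>\<^sub>p\<^sup>2\<close> because \<open>p\<close> is odd. A directed cycle of the functional
  graph is an orbit, so its length is the least \<open>n > 0\<close> with \<open>(1 + i)\<^sup>n z = z\<close> and
  \<open>(1 - i)\<^sup>n w = w\<close>: it is \<open>1\<close>, \<open>ord(1 - i)\<close> or \<open>lcm(ord(1 + i), ord(1 - i))\<close> according to which
  of \<open>z, w\<close> vanish. As \<open>(1 \<plusminus> i)\<^sup>4 = -4\<close>, both orders lie between \<open>t\<close> and \<open>4t\<close> in the
  divisibility order, and as \<open>(1 \<plusminus> i)\<^sup>2 = \<plusminus>2i\<close> they cannot both divide \<open>2t\<close>. Hence the larger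
  one, \<open>ord(1 + i)\<close>, is \<open>4t = k\<close>, and it is a multiple of \<open>s = ord(1 - i)\<close>.\<close>

lemma mult_ord_pos_power_eq_one:
  fixes x :: "'a::monoid_mult"
  assumes "0 < m" "x ^ m = 1"
  shows "0 < mult_ord x \<and> x ^ mult_ord x = 1"
  unfolding mult_ord_def using assms by (rule LeastI[where P = "\<lambda>n. 0 < n \<and> x ^ n = 1", OF conjI])

lemma power_eq_one_iff_mult_ord_dvd:
  fixes x :: "'a::monoid_mult"
  assumes "0 < m" "x ^ m = 1"
  shows "x ^ n = 1 \<longleftrightarrow> mult_ord x dvd n"
proof
  have ord: "0 < mult_ord x" "x ^ mult_ord x = 1"
    using mult_ord_pos_power_eq_one[OF assms] by auto
  assume "x ^ n = 1"
  moreover have "x ^ n = (x ^ mult_ord x) ^ (n div mult_ord x) * x ^ (n mod mult_ord x)"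
    by (simp only: power_mult[symmetric] power_add[symmetric] mult_div_mod_eq)
  ultimately have "x ^ (n mod mult_ord x) = 1"
    using ord(2) by simp
  moreover have "\<not> (0 < n mod mult_ord x \<and> x ^ (n mod mult_ord x) = 1)"
    using ord(1) unfolding mult_ord_def by (intro not_less_Least) simp
  ultimately have "n mod mult_ord x = 0"
    by simp
  then show "mult_ord x dvd n"
    by (simp add: dvd_eq_mod_eq_0)
next
  assume "mult_ord x dvd n"
  then show "x ^ n = 1"
    using mult_ord_pos_power_eq_one[OF assms] by (auto simp: power_mult)
qed

lemma ex_power_eq_one:
  fixes x :: "'a::{division_ring,finite}"
  assumes "x \<noteq> 0"
  obtains m where "0 < m" "x ^ m = 1"
proof -
  have "inj ((*) x)"
    using assms by (auto intro: injI)
  then obtain m where "0 < m" "((*) x ^^ m) 1 = 1"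
    by (rule funpow_inj_finite) simp
  moreover have "((*) x ^^ n) 1 = x ^ n" for n
    by (induction n) simp_all
  ultimately show thesis
    using that by simp
qed

lemma mult_ord_pos:
  fixes x :: "'a::{division_ring,finite}"
  assumes "x \<noteq> 0"
  shows "0 < mult_ord x"
proof -
  obtain m where "0 < m" "x ^ m = 1"
    using ex_power_eq_one[OF assms] .
  then show ?thesis
    using mult_ord_pos_power_eq_one by blast
qed

lemma power_eq_one_iff_mult_ord_dvd_finite:
  fixes x :: "'a::{division_ring,finite}"
  assumes "x \<noteq> 0"
  shows "x ^ n = 1 \<longleftrightarrow> mult_ord x dvd n"
proof -
  obtain m where "0 < m" "x ^ m = 1"
    using ex_power_eq_one[OF assms] .
  then show ?thesis
    by (rule power_eq_one_iff_mult_ord_dvd)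
qed

lemma mult_ord_dvd_of_power_eq:
  fixes x :: "'a::{division_ring,finite}"
  assumes "x \<noteq> 0" "x ^ k = c"
  shows "mult_ord c dvd mult_ord x" "mult_ord x dvd k * mult_ord c"
proof -
  have c: "c \<noteq> 0"
    using assms by auto
  have "c ^ mult_ord x = (x ^ mult_ord x) ^ k"
    unfolding assms(2)[symmetric] by (simp only: power_mult[symmetric] mult.commute)
  also have "\<dots> = 1"
    using power_eq_one_iff_mult_ord_dvd_finite[OF assms(1), of "mult_ord x"] by simp
  finally show "mult_ord c dvd mult_ord x"
    using power_eq_one_iff_mult_ord_dvd_finite[OF c] by simp
  have "x ^ (k * mult_ord c) = c ^ mult_ord c"
    using assms(2) by (simp add: power_mult)
  also have "\<dots> = 1"
    using power_eq_one_iff_mult_ord_dvd_finite[OF c, of "mult_ord c"] by simp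
  finally show "mult_ord x dvd k * mult_ord c"
    using power_eq_one_iff_mult_ord_dvd_finite[OF assms(1)] by simp
qed

lemma one_plus_sqrt_minus_one_sq:
  fixes j :: "'a::comm_ring_1"
  assumes "j ^ 2 = -1"
  shows "(1 + j) ^ 2 = 2 * j"
proof -
  have "(1 + j) ^ 2 = 1 + 2 * j + j ^ 2"
    by (simp add: power2_eq_square algebra_simps)
  then show ?thesis
    using assms by simp
qed

lemma one_plus_sqrt_minus_one_pow4:
  fixes j :: "'a::comm_ring_1"
  assumes "j ^ 2 = -1"
  shows "(1 + j) ^ 4 = -4"
proof -
  have "(1 + j) ^ 4 = ((1 + j) ^ 2) ^ 2"
    by (simp flip: power_mult)
  also have "\<dots> = (2 * j) ^ 2"
    using one_plus_sqrt_minus_one_sq[OF assms] by simp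
  also have "\<dots> = -4"
    unfolding power_mult_distrib assms by simp
  finally show ?thesis .
qed

lemma dvd_four_times_cases:
  fixes a t :: nat
  assumes "t dvd a" "a dvd 4 * t" "0 < t"
  shows "a dvd 2 * t \<or> a = 4 * t"
proof -
  obtain e where e: "a = t * e"
    using assms(1) by blast
  then have "e dvd 4"
    using assms(2,3) by (simp add: mult.commute)
  moreover have "e \<le> 4"
    using \<open>e dvd 4\<close> by (rule dvd_imp_le) simp
  moreover have "e \<noteq> 0"
    using \<open>e dvd 4\<close> by (metis dvd_0_left_iff zero_neq_numeral)
  moreover have "e \<noteq> 3"
    using \<open>e dvd 4\<close> by auto
  ultimately have "e \<in> {1, 2, 4}"
    by auto
  then show ?thesis
    using e by auto
qed

lemma minus_four_neq_zero:
  assumes "(2::'a::field) \<noteq> 0"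
  shows "(-4::'a) \<noteq> 0"
proof -
  have "(2::'a) * 2 \<noteq> 0"
    using assms by (metis mult_eq_0_iff)
  then show ?thesis
    by simp
qed

lemma mult_ord_one_plus_sqrt_minus_one:
  fixes j :: "'a::{field,finite}"
  assumes "(2::'a) \<noteq> 0" "j ^ 2 = -1"
  shows "1 + j \<noteq> 0"
    and "mult_ord (-4::'a) dvd mult_ord (1 + j)"
    and "mult_ord (1 + j) dvd 4 * mult_ord (-4::'a)"
proof -
  have pow4: "(1 + j) ^ 4 = -4"
    using assms(2) by (rule one_plus_sqrt_minus_one_pow4)
  then show nz: "1 + j \<noteq> 0"
    using minus_four_neq_zero[OF assms(1)] by auto
  show "mult_ord (-4::'a) dvd mult_ord (1 + j)" "mult_ord (1 + j) dvd 4 * mult_ord (-4::'a)"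
    using mult_ord_dvd_of_power_eq[OF nz pow4] by auto
qed

lemma mult_ord_one_minus_sqrt_minus_one:
  fixes j :: "'a::{field,finite}"
  assumes "(2::'a) \<noteq> 0" "j ^ 2 = -1"
  shows "1 - j \<noteq> 0"
    and "mult_ord (-4::'a) dvd mult_ord (1 - j)"
    and "mult_ord (1 - j) dvd 4 * mult_ord (-4::'a)"
  using mult_ord_one_plus_sqrt_minus_one[of "-j"] assms by simp_all

lemma not_both_mult_ord_dvd_twice:
  fixes i :: "'a::{field,finite}"
  assumes "(2::'a) \<noteq> 0" "i ^ 2 = -1"
  defines "t \<equiv> mult_ord (-4::'a)"
  shows "\<not> (mult_ord (1 + i) dvd 2 * t \<and> mult_ord (1 - i) dvd 2 * t)"
proof
  have t: "0 < t"
    unfolding t_def using minus_four_neq_zero[OF assms(1)] by (rule mult_ord_pos)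
  have minus_sq: "(1 - i) ^ 2 = - (2 * i)"
    using one_plus_sqrt_minus_one_sq[of "-i"] assms(2) by simp
  assume "mult_ord (1 + i) dvd 2 * t \<and> mult_ord (1 - i) dvd 2 * t"
  then have "(1 + i) ^ (2 * t) = 1" "(1 - i) ^ (2 * t) = 1"
    using power_eq_one_iff_mult_ord_dvd_finite[OF mult_ord_one_plus_sqrt_minus_one(1)[OF assms(1,2)]]
      power_eq_one_iff_mult_ord_dvd_finite[OF mult_ord_one_minus_sqrt_minus_one(1)[OF assms(1,2)]]
    by auto
  then have pos: "(2 * i) ^ t = 1" and neg: "(- (2 * i)) ^ t = 1"
    unfolding power_mult minus_sq one_plus_sqrt_minus_one_sq[OF assms(2)] by simp_all
  have "even t"
  proof (rule ccontr)
    assume "odd t"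
    then have "(- (2 * i)) ^ t = - ((2 * i) ^ t)"
      by simp
    then have "(1::'a) = -1"
      using pos neg by simp
    then show False
      using assms(1) by (metis add.right_inverse one_add_one)
  qed
  then obtain m where m: "t = 2 * m"
    by blast
  have "(-4::'a) ^ m = ((2 * i) ^ 2) ^ m"
    using assms(2) by (simp add: power_mult_distrib)
  also have "\<dots> = 1"
    using pos unfolding m power_mult .
  finally have "t dvd m"
    unfolding t_def using power_eq_one_iff_mult_ord_dvd_finite[OF minus_four_neq_zero[OF assms(1)]] by simp
  then show False
    using t m by (auto dest: dvd_imp_le)
qed

lemma larger_mult_ord_one_pm_i_eq:
  fixes i :: "'a::{field,finite}"
  assumes "(2::'a) \<noteq> 0" "i ^ 2 = -1" "mult_ord (1 - i) \<le> mult_ord (1 + i)"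
  shows "mult_ord (1 + i) = 4 * mult_ord (-4::'a)"
proof (rule ccontr)
  let ?t = "mult_ord (-4::'a)"
  have t: "0 < ?t"
    using minus_four_neq_zero[OF assms(1)] by (rule mult_ord_pos)
  note plus = mult_ord_one_plus_sqrt_minus_one[OF assms(1,2)]
  note minus = mult_ord_one_minus_sqrt_minus_one[OF assms(1,2)]
  assume "mult_ord (1 + i) \<noteq> 4 * ?t"
  then have "mult_ord (1 + i) dvd 2 * ?t"
    using dvd_four_times_cases[OF plus(2,3) t] by blast
  then have "\<not> mult_ord (1 - i) dvd 2 * ?t"
    using not_both_mult_ord_dvd_twice[OF assms(1,2)] by blast
  then have "mult_ord (1 - i) = 4 * ?t"
    using dvd_four_times_cases[OF minus(2,3) t] by blast
  moreover have "mult_ord (1 + i) \<le> 2 * ?t"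
    using \<open>mult_ord (1 + i) dvd 2 * ?t\<close> t by (simp add: dvd_imp_le)
  ultimately show False
    using assms(3) t by simp
qed

lemma CHAR_eq_prime_if_card_prime_power:
  assumes "prime p" "CARD('a::{idom,finite}) = p ^ k" "0 < k"
  shows "CHAR('a) = p"
proof -
  have "prime CHAR('a)"
    by (intro prime_CHAR_semidom finite_imp_CHAR_pos) simp
  moreover have "CHAR('a) dvd p ^ k"
    using CHAR_dvd_CARD[where 'a='a] assms(2) by simp
  ultimately have "CHAR('a) dvd p"
    using prime_dvd_power by blast
  then show ?thesis
    using \<open>prime CHAR('a)\<close> assms(1) by (simp add: primes_dvd_imp_eq)
qed

lemma ord_minus4_eq_mult_ord:
  assumes "CHAR('a::ring_1) = p"
  shows "ord_minus4 p = mult_ord (-4::'a)"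
proof -
  have "[(-4::int) ^ n = 1] (mod int p) \<longleftrightarrow> (-4::'a) ^ n = 1" for n
    using of_int_eq_iff_cong_CHAR[where 'a='a, of "(-4) ^ n" 1] assms by simp
  then show ?thesis
    unfolding ord_minus4_def mult_ord_def by simp
qed

lemma eq_1_or_eq_of_dvd_iff:
  fixes L a b :: nat
  assumes L: "\<And>n. L dvd n \<longleftrightarrow> (A \<or> a dvd n) \<and> (B \<or> b dvd n)" and "b dvd a"
  shows "L = 1 \<or> L = b \<or> L = a"
proof -
  have eq: "L = c" if "\<And>n. L dvd n \<longleftrightarrow> c dvd n" for c
    using that[of L] that[of c] by (simp add: dvd_antisym)
  consider "A" "B" | "A" "\<not> B" | "\<not> A"
    by blast
  then show ?thesis
  proof cases
    case 1
    then have "L = 1"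
      using L by (intro eq) simp
    then show ?thesis ..
  next
    case 2
    then have "L = b"
      using L by (intro eq) simp
    then show ?thesis by simp
  next
    case 3
    then have "L = a"
      using L \<open>b dvd a\<close> by (intro eq) (auto intro: dvd_trans)
    then show ?thesis by simp
  qed
qed

lemma directed_cycle_funpow_eq_iff_dvd:
  assumes "directed_cycle V (\<lambda>v w. w = f v) cs"
  shows "(f ^^ n) (cs ! 0) = cs ! 0 \<longleftrightarrow> length cs dvd n"
proof -
  let ?L = "length cs" and ?x = "cs ! 0"
  have L: "0 < ?L" and dist: "distinct cs"
    and step: "\<And>j. j < ?L \<Longrightarrow> cs ! ((j + 1) mod ?L) = f (cs ! j)"
    using assms unfolding directed_cycle_def by auto
  have nth: "cs ! j = (f ^^ j) ?x" if "j < ?L" for j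
    using that
  proof (induction j)
    case (Suc j)
    then show ?case
      using step[of j] by simp
  qed simp
  obtain k where k: "?L = Suc k"
    using L gr0_implies_Suc by blast
  have "(f ^^ ?L) ?x = f (cs ! k)"
    using nth[of k] k by simp
  also have "\<dots> = ?x"
    using step[of k] k by simp
  finally have period: "(f ^^ ?L) ?x = ?x" .
  have "(f ^^ n) ?x = cs ! (n mod ?L)"
    using funpow_mod_eq[OF period, of n] nth[of "n mod ?L"] L by simp
  also have "\<dots> = ?x \<longleftrightarrow> n mod ?L = 0"
    using nth_eq_iff_index_eq[OF dist, of "n mod ?L" 0] L by simp
  finally show ?thesis
    by (simp add: dvd_eq_mod_eq_0)
qed

definition subadd_step :: "nat \<Rightarrow> int \<times> int \<Rightarrow> int \<times> int" where
  "subadd_step n v = ((fst v - snd v) mod int n, (fst v + snd v) mod int n)"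

lemma subadd_arc_eq: "subadd_arc n = (\<lambda>v w. w = subadd_step n v)"
  by (simp add: fun_eq_iff subadd_arc_def subadd_step_def)

lemma funpow_subadd_step_in_zn2_verts:
  assumes "v \<in> zn2_verts n"
  shows "(subadd_step n ^^ k) v \<in> zn2_verts n"
proof (cases k)
  case (Suc k')
  have "0 < n"
    using assms by (auto simp: zn2_verts_def)
  then show ?thesis
    using Suc by (simp add: subadd_step_def zn2_verts_def)
qed (simp add: assms)

text \<open>The rows \<open>(1, i)\<close> and \<open>(1, -i)\<close> are left eigenvectors of \<open>M\<close> for the eigenvalues
  \<open>1 + i\<close> and \<open>1 - i\<close>.\<close>
definition subadd_diag :: "'a::comm_ring_1 \<Rightarrow> int \<times> int \<Rightarrow> 'a \<times> 'a" where
  "subadd_diag i v = (of_int (fst v) + of_int (snd v) * i, of_int (fst v) - of_int (snd v) * i)"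

lemma subadd_diag_step:
  fixes i :: "'a::comm_ring_1"
  assumes "CHAR('a) = n" "i ^ 2 = -1"
  shows "subadd_diag i (subadd_step n v) = map_prod ((*) (1 + i)) ((*) (1 - i)) (subadd_diag i v)"
proof -
  have of_int_mod: "(of_int (x mod int n) :: 'a) = of_int x" for x
    using of_int_eq_iff_cong_CHAR[where 'a='a] assms(1) by (simp add: cong_def)
  have ii: "i * (i * x) = - x" for x
    using assms(2) by (simp add: power2_eq_square mult.assoc[symmetric])
  show ?thesis
    unfolding subadd_diag_def subadd_step_def
    by (simp add: of_int_mod algebra_simps ii)
qed

lemma subadd_diag_funpow:
  fixes i :: "'a::comm_ring_1"
  assumes "CHAR('a) = n" "i ^ 2 = -1"
  shows "subadd_diag i ((subadd_step n ^^ k) v)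
    = map_prod ((*) ((1 + i) ^ k)) ((*) ((1 - i) ^ k)) (subadd_diag i v)"
  by (induction k) (simp_all add: subadd_diag_step[OF assms] map_prod_def split_beta mult.assoc)

lemma inj_on_subadd_diag:
  fixes i :: "'a::field"
  assumes "CHAR('a) = n" "(2::'a) \<noteq> 0" "i ^ 2 = -1"
  shows "inj_on (subadd_diag i) (zn2_verts n)"
proof (rule inj_onI)
  fix v w
  assume "v \<in> zn2_verts n" "w \<in> zn2_verts n" and eq: "subadd_diag i v = subadd_diag i w"
  then obtain a b c d where v: "v = (a, b)" and w: "w = (c, d)"
    and range: "a \<in> {0..<int n}" "b \<in> {0..<int n}" "c \<in> {0..<int n}" "d \<in> {0..<int n}"
    by (auto simp: zn2_verts_def)
  define A B C D where "A = (of_int a :: 'a)" "B = (of_int b :: 'a)" "C = (of_int c :: 'a)" "D = (of_int d :: 'a)"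
  have plus: "A + B * i = C + D * i" and minus: "A - B * i = C - D * i"
    using eq unfolding v w A_B_C_D_def subadd_diag_def by simp_all
  have "2 * A = (A + B * i) + (A - B * i)"
    by (simp add: algebra_simps mult_2)
  also have "\<dots> = 2 * C"
    unfolding plus minus by (simp add: algebra_simps mult_2)
  finally have "A = C"
    using assms(2) by simp
  have "(2 * i) * B = (A + B * i) - (A - B * i)"
    by (simp add: algebra_simps mult_2)
  also have "\<dots> = (2 * i) * D"
    unfolding plus minus by (simp add: algebra_simps mult_2)
  finally have "B = D"
    using assms(2,3) by auto
  have "[a = c] (mod int n)" "[b = d] (mod int n)"
    using \<open>A = C\<close> \<open>B = D\<close> of_int_eq_iff_cong_CHAR[where 'a='a] assms(1)
    unfolding A_B_C_D_def by simp_all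
  then show "v = w"
    using range unfolding v w by (simp add: cong_def)
qed

lemma subadd_cycle_length_dvd_iff:
  fixes i :: "'a::field"
  assumes "CHAR('a) = p" "(2::'a) \<noteq> 0" "i ^ 2 = -1"
    and cycle: "directed_cycle (zn2_verts p) (subadd_arc p) cs"
    and zw: "subadd_diag i (cs ! 0) = (z, w)"
  shows "length cs dvd n \<longleftrightarrow> (z = 0 \<or> (1 + i) ^ n = 1) \<and> (w = 0 \<or> (1 - i) ^ n = 1)"
proof -
  let ?x = "cs ! 0" and ?f = "subadd_step p"
  have x: "?x \<in> zn2_verts p"
    using cycle unfolding directed_cycle_def by auto
  have "length cs dvd n \<longleftrightarrow> (?f ^^ n) ?x = ?x"
    using directed_cycle_funpow_eq_iff_dvd cycle unfolding subadd_arc_eq by metis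
  also have "\<dots> \<longleftrightarrow> subadd_diag i ((?f ^^ n) ?x) = subadd_diag i ?x"
    using inj_on_subadd_diag[OF assms(1-3)] funpow_subadd_step_in_zn2_verts[OF x] x
    by (auto dest: inj_onD)
  also have "\<dots> \<longleftrightarrow> (1 + i) ^ n * z = z \<and> (1 - i) ^ n * w = w"
    unfolding subadd_diag_funpow[OF assms(1,3)] zw by simp
  finally show ?thesis
    unfolding mult_cancel_right2 by blast
qed

theorem proposition7p1:
  fixes p :: nat and i :: "'a::{field,finite}" and cs :: "(int \<times> int) list"
  assumes "prime p" and "odd p"
    and "CARD('a) = p ^ 2"
    and "i ^ 2 = -1"
    and "mult_ord (1 - i) \<le> mult_ord (1 + i)"
    and "directed_cycle (zn2_verts p) (subadd_arc p) cs"
  shows "length cs \<in> {1, mult_ord (1 - i), 4 * ord_minus4 p}"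
proof -
  have char: "CHAR('a) = p"
    using CHAR_eq_prime_if_card_prime_power[OF assms(1,3)] by simp
  have "\<not> p dvd 2"
    using primes_dvd_imp_eq[OF assms(1) two_is_prime_nat] assms(2) by auto
  then have two: "(2::'a) \<noteq> 0"
    using of_nat_eq_0_iff_char_dvd[where 'a='a, of 2] char by simp
  note plus = mult_ord_one_plus_sqrt_minus_one[OF two assms(4)]
  note minus = mult_ord_one_minus_sqrt_minus_one[OF two assms(4)]
  obtain z w where zw: "subadd_diag i (cs ! 0) = (z, w)"
    by fastforce
  have "length cs dvd n \<longleftrightarrow> (z = 0 \<or> mult_ord (1 + i) dvd n) \<and> (w = 0 \<or> mult_ord (1 - i) dvd n)"
    for n
    using subadd_cycle_length_dvd_iff[OF char two assms(4,6) zw]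
      power_eq_one_iff_mult_ord_dvd_finite[OF plus(1)] power_eq_one_iff_mult_ord_dvd_finite[OF minus(1)]
    by simp
  moreover have ord: "mult_ord (1 + i) = 4 * mult_ord (-4::'a)"
    using two assms(4,5) by (rule larger_mult_ord_one_pm_i_eq)
  ultimately have "length cs \<in> {1, mult_ord (1 - i), mult_ord (1 + i)}"
    using eq_1_or_eq_of_dvd_iff minus(3) by (metis insert_iff)
  then show ?thesis
    using ord ord_minus4_eq_mult_ord[OF char] by auto
qed

end
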